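(* Let $S$ be a modal left $E$-monoid, with $e\in E(S)$ and $f\in E$. Then $(e\cdot f)e$ is an idempotent which is a greatest lower bound of $e$ and $f$ in $E(S)$ with respect to $\le_r$ (that is, $(e\cdot f)e\le_r e$, $(e\cdot f)e\le_r f$, and every $g\in E(S)$ with $g\le_r e$ and $g\le_r f$ satisfies $g\le_r (e\cdot f)e$). Moreover, if $s\in S$ satisfies $se=sf=s$, then $s(e\cdot f)e=s$.
   Context: For a semigroup $S$, $E(S)$ is its set of idempotents; for $e,f\in E(S)$, $e\le_r f$ iff $e=ef$ (a quasiorder on $E(S)$). $E\subseteq E(S)$ is right pre-reduced if $e=ef$ and $f=fe$ imply $e=f$ for $e,f\in E$. Let $S$ be a monoid and $1\in E\subseteq E(S)$. $S$ is a modal left $E$-monoid if $E$ is right pre-reduced and (I1') for all $t\in S$, $e\in E$ there is $t\cdot e\in E$ such that for all $s\in S$: $ste=st$ iff $s(t\cdot e)=s$; the (necessarily unique) map $(t,e)\mapsto t\cdot e$ on $S\times E$ is the left $E$-modal operation. *)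

theory Defs
  imports Main
begin

text \<open>The monoid S is the whole carrier of a type of class monoid_mult.\<close>

definition idem :: "'a::monoid_mult \<Rightarrow> bool" where
  "idem e \<longleftrightarrow> e * e = e"

definition le_r :: "'a::monoid_mult \<Rightarrow> 'a \<Rightarrow> bool" where
  "le_r e f \<longleftrightarrow> e = e * f"

definition right_pre_reduced :: "'a::monoid_mult set \<Rightarrow> bool" where
  "right_pre_reduced E \<longleftrightarrow>
     (\<forall>e\<in>E. \<forall>f\<in>E. e = e * f \<and> f = f * e \<longrightarrow> e = f)"

text \<open>S is a modal left E-monoid with left E-modal operation dot (t \<cdot> e = dot t e).\<close>
definition modal_left_E_monoid :: "'a::monoid_mult set \<Rightarrow> ('a \<Rightarrow> 'a \<Rightarrow> 'a) \<Rightarrow> bool" where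
  "modal_left_E_monoid E dot \<longleftrightarrow>
     1 \<in> E \<and> (\<forall>e\<in>E. idem e) \<and> right_pre_reduced E \<and>
     (\<forall>t. \<forall>e\<in>E. dot t e \<in> E \<and> (\<forall>s. s * t * e = s * t \<longleftrightarrow> s * dot t e = s))"

end

theory Submission
  imports Defs
begin

text \<open>Everything follows from the defining property of the modal operation, read as
  "\<open>s * (e \<cdot> f) = s\<close> exactly when \<open>s * e\<close> is fixed by \<open>f\<close>": applied to \<open>s = (e \<cdot> f) * e\<close>
  it gives idempotency, and applied to a common lower bound \<open>s\<close> of \<open>e\<close> and \<open>f\<close> it gives
  \<open>s * (e \<cdot> f) * e = s\<close>, hence the greatest lower bound property.\<close>

lemma modal_dot_in_E:
  assumes "modal_left_E_monoid E dot" and "f \<in> E"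
  shows "dot t f \<in> E"
  using assms unfolding modal_left_E_monoid_def by blast

lemma modal_dot_right_unit_iff:
  assumes "modal_left_E_monoid E dot" and "f \<in> E"
  shows "s * dot t f = s \<longleftrightarrow> s * t * f = s * t"
  using assms unfolding modal_left_E_monoid_def by blast

lemma modal_idem:
  assumes "modal_left_E_monoid E dot" and "f \<in> E"
  shows "f * f = f"
  using assms unfolding modal_left_E_monoid_def idem_def by blast

lemma modal_dot_mult_absorb:
  assumes "modal_left_E_monoid E dot" and "f \<in> E"
  shows "dot t f * t * f = dot t f * t"
  using modal_dot_right_unit_iff [OF assms, of "dot t f" t]
    modal_idem [OF assms(1) modal_dot_in_E [OF assms]] by simp

lemma modal_dot_mult_right_unit:
  assumes "modal_left_E_monoid E dot" and "f \<in> E"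
    and "s * t = s" and "s * f = s"
  shows "s * (dot t f * t) = s"
proof -
  have "s * t * f = s * t" using assms(3,4) by simp
  then have "s * dot t f = s" using modal_dot_right_unit_iff [OF assms(1,2)] by blast
  then show ?thesis using assms(3) by (simp add: mult.assoc [symmetric])
qed

lemma modal_dot_mult_idem:
  assumes "modal_left_E_monoid E dot" and "f \<in> E" and "idem e"
  shows "idem (dot e f * e)"
proof -
  let ?p = "dot e f * e"
  have ee: "e * e = e" using assms(3) unfolding idem_def .
  have "?p * e * f = ?p * e"
    using modal_dot_mult_absorb [OF assms(1,2), of e] ee by (simp add: mult.assoc)
  then have "?p * dot e f = ?p"
    using modal_dot_right_unit_iff [OF assms(1,2), of ?p e] ee by (simp add: mult.assoc)
  then have "?p * ?p = ?p * e" by (simp add: mult.assoc [symmetric])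
  then show ?thesis unfolding idem_def using ee by (simp add: mult.assoc)
qed

theorem lemma5p6:
  fixes E :: "'a::monoid_mult set" and dot :: "'a \<Rightarrow> 'a \<Rightarrow> 'a" and e f :: 'a
  assumes "modal_left_E_monoid E dot"
    and "idem e"
    and "f \<in> E"
  shows "idem (dot e f * e)
    \<and> le_r (dot e f * e) e
    \<and> le_r (dot e f * e) f
    \<and> (\<forall>g. idem g \<and> le_r g e \<and> le_r g f \<longrightarrow> le_r g (dot e f * e))
    \<and> (\<forall>s. s * e = s \<and> s * f = s \<longrightarrow> s * (dot e f * e) = s)"
proof -
  have ee: "e * e = e" using assms(2) unfolding idem_def .
  have lower_e: "le_r (dot e f * e) e" unfolding le_r_def using ee by (simp add: mult.assoc)
  have lower_f: "le_r (dot e f * e) f"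
    unfolding le_r_def using modal_dot_mult_absorb [OF assms(1,3)] by simp
  have absorb: "\<forall>s. s * e = s \<and> s * f = s \<longrightarrow> s * (dot e f * e) = s"
    using modal_dot_mult_right_unit [OF assms(1,3)] by blast
  then have "\<forall>g. idem g \<and> le_r g e \<and> le_r g f \<longrightarrow> le_r g (dot e f * e)"
    unfolding le_r_def by metis
  then show ?thesis
    using modal_dot_mult_idem [OF assms(1,3,2)] lower_e lower_f absorb by blast
qed

end
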